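(* Let $\omega\in\mathbb C\setminus\{0\}$ be fixed. There is exactly one pair of series $\mathsf W(x)\in\mathbb C[x][[t]]$ and $\mathsf H(x,y)\in\mathbb C[x,y][[t]]$ satisfying \[ \mathsf W(x)=x^2t\,\mathsf W(x)^2+\omega x t\,\mathsf H(x,0)+\omega^{-1}xt\,\mathsf H(0,x)+1 \] and \[ \mathsf H(x,y)=\mathsf W(x)\mathsf W(y)+\frac{\omega^{-1}}{y}\big(\mathsf H(x,y)-\mathsf H(x,0)\big)+\frac{\omega}{x}\big(\mathsf H(x,y)-\mathsf H(0,y)\big). \]
   Context: Here $\mathbb C[x][[t]]$ denotes formal power series in $t$ whose coefficients are polynomials in $x$ (similarly for $\mathbb C[x,y][[t]]$). The expressions $(\mathsf H(x,y)-\mathsf H(x,0))/y$ and $(\mathsf H(x,y)-\mathsf H(0,y))/x$ are again in $\mathbb C[x,y][[t]]$. *)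

theory Defs
  imports "HOL-Computational_Algebra.Polynomial" "HOL-Computational_Algebra.Formal_Power_Series"
begin

(* C[x][[t]]  = complex poly fps        (variable x is the poly variable)
   C[x,y][[t]] = complex poly poly fps   (outer poly variable y, inner poly variable x) *)

definition fps_cmap :: "('a::zero \<Rightarrow> 'b::zero) \<Rightarrow> 'a fps \<Rightarrow> 'b fps" where
  "fps_cmap f F = Abs_fps (\<lambda>n. f (fps_nth F n))"

definition sub_y0 :: "complex poly poly \<Rightarrow> complex poly" where
  "sub_y0 p = coeff p 0"

(* H(0,y) : substitute x = 0 (result is a polynomial in y, returned as a univariate poly) *)
definition sub_x0 :: "complex poly poly \<Rightarrow> complex poly" where
  "sub_x0 p = map_poly (\<lambda>c. poly c 0) p"

definition as_x :: "complex poly \<Rightarrow> complex poly poly" where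
  "as_x p = [:p:]"
definition as_y :: "complex poly \<Rightarrow> complex poly poly" where
  "as_y p = map_poly (\<lambda>c. [:c:]) p"

definition divY :: "complex poly poly \<Rightarrow> complex poly poly" where
  "divY p = (p - as_x (sub_y0 p)) div [:0, 1:]"

definition divX :: "complex poly poly \<Rightarrow> complex poly poly" where
  "divX p = (p - as_y (sub_x0 p)) div [:[:0, 1:]:]"

end

theory Submission imports Defs begin

unbundle fps_syntax

text \<open>For fixed \<open>W\<close>, the second equation says, coefficientwise in \<open>t\<close>, that \<open>H\<^sub>n = P\<^sub>n + N H\<^sub>n\<close>
  with \<open>P = W(x) W(y)\<close> and \<open>N = \<omega>\<^sup>-\<^sup>1 \<Delta>\<^sub>y + \<omega> \<Delta>\<^sub>x\<close>, where \<open>\<Delta>\<^sub>x, \<Delta>\<^sub>y\<close> are the two divided differences.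
  Since \<open>N\<close> strictly lowers the total degree in \<open>x, y\<close>, it is locally nilpotent, so \<open>H\<^sub>n\<close> is
  uniquely determined, namely \<open>H\<^sub>n = \<Sum>\<^sub>k N\<^sup>k P\<^sub>n\<close>. Substituting this \<open>H\<close> into the first equation
  gives a fixed-point equation \<open>W = \<Phi> W\<close> in which the coefficient of \<open>t\<^sup>n\<close> of \<open>\<Phi> W\<close> depends only
  on the coefficients of \<open>W\<close> below \<open>t\<^sup>n\<close>; such an equation has exactly one solution.\<close>

lemma unique_solution_if_locally_nilpotent:
  fixes N :: "'a::ab_group_add \<Rightarrow> 'a"
  assumes additive: "\<And>x y. N (x + y) = N x + N y"
    and nilpotent: "\<And>x. \<exists>k. (N ^^ k) x = 0"
  shows "\<exists>!h. h = p + N h"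
proof -
  have N_0: "N 0 = 0"
    using additive[of 0 0] by simp
  have N_diff: "N (x - y) = N x - N y" for x y
    using additive[of "x - y" y] by (simp add: eq_diff_eq)
  obtain K where K: "(N ^^ K) p = 0"
    using nilpotent by blast
  define h where "h = (\<Sum>k<K. (N ^^ k) p)"
  have "N h = (\<Sum>k<K. (N ^^ Suc k) p)"
    using sum_comp_morphism[of N, OF N_0 additive, of "\<lambda>k. (N ^^ k) p" "{..<K}"]
    by (simp add: h_def comp_def)
  also have "\<dots> = (\<Sum>k<Suc K. (N ^^ k) p) - p"
    by (subst sum.lessThan_Suc_shift) simp
  also have "\<dots> = h - p"
    using K by (simp add: h_def)
  finally have solution: "h = p + N h"
    by simp
  have "h' = h" if h': "h' = p + N h'" for h'
  proof -
    have fixed: "N (h' - h) = h' - h"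
      using h' solution N_diff by (metis add_diff_cancel_left)
    have "(N ^^ k) (h' - h) = h' - h" for k
      by (induction k) (simp_all add: fixed)
    then show ?thesis
      using nilpotent[of "h' - h"] by auto
  qed
  with solution show ?thesis
    by blast
qed

lemma poly_shift_1_eq_div:
  fixes q :: "'a::idom_divide poly"
  shows "(q - [:coeff q 0:]) div [:0, 1:] = poly_shift 1 q"
proof -
  have "q - [:coeff q 0:] = [:0, 1:] * poly_shift 1 q"
    by (rule poly_eqI) (auto simp: coeff_pCons coeff_poly_shift split: nat.split)
  then show ?thesis
    by (metis nonzero_mult_div_cancel_left pCons_eq_0_iff zero_neq_one)
qed

lemma divY_eq_poly_shift: "divY p = poly_shift 1 p"
  unfolding divY_def as_x_def sub_y0_def by (rule poly_shift_1_eq_div)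

lemma divX_eq_map_poly_shift: "divX p = map_poly (poly_shift 1) p"
proof -
  have "p - as_y (sub_x0 p) = [:[:0, 1:]:] * map_poly (poly_shift 1) p"
  proof (rule poly_eqI)
    fix i
    let ?c = "coeff p i"
    have "?c - [:coeff ?c 0:] = [:0, 1:] * poly_shift 1 ?c"
      by (rule poly_eqI) (auto simp: coeff_pCons coeff_poly_shift split: nat.split)
    then show "coeff (p - as_y (sub_x0 p)) i = coeff ([:[:0, 1:]:] * map_poly (poly_shift 1) p) i"
      by (simp add: as_y_def sub_x0_def coeff_map_poly poly_0_coeff_0)
  qed
  then show ?thesis
    unfolding divX_def by (metis nonzero_mult_div_cancel_left pCons_eq_0_iff zero_neq_one)
qed

text \<open>With \<open>y\<close> the outer variable, this is \<open>a \<Delta>\<^sub>y + b \<Delta>\<^sub>x\<close>.\<close>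

definition divdiff_comb :: "'a \<Rightarrow> 'a \<Rightarrow> 'a::comm_ring_1 poly poly \<Rightarrow> 'a poly poly" where
  "divdiff_comb a b p = [:[:a:]:] * poly_shift 1 p + [:[:b:]:] * map_poly (poly_shift 1) p"

lemma coeff_coeff_divdiff_comb:
  "coeff (coeff (divdiff_comb a b p) i) j
     = a * coeff (coeff p (Suc i)) j + b * coeff (coeff p i) (Suc j)"
  by (simp add: divdiff_comb_def coeff_poly_shift coeff_map_poly)

lemma divdiff_comb_add: "divdiff_comb a b (p + q) = divdiff_comb a b p + divdiff_comb a b q"
  by (intro poly_eqI) (simp add: coeff_coeff_divdiff_comb algebra_simps)

definition total_degree_below :: "nat \<Rightarrow> 'a::zero poly poly \<Rightarrow> bool" where
  "total_degree_below D p \<longleftrightarrow> (\<forall>i j. D \<le> i + j \<longrightarrow> coeff (coeff p i) j = 0)"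

lemma total_degree_below_exists: "\<exists>D. total_degree_below D p"
proof
  let ?D = "Suc (degree p + (\<Sum>i\<le>degree p. degree (coeff p i)))"
  show "total_degree_below ?D p"
    unfolding total_degree_below_def
  proof (intro allI impI)
    fix i j
    assume ij: "?D \<le> i + j"
    show "coeff (coeff p i) j = 0"
    proof (cases "i \<le> degree p")
      case True
      then have "degree (coeff p i) \<le> (\<Sum>i\<le>degree p. degree (coeff p i))"
        by (intro member_le_sum) auto
      with ij True have "degree (coeff p i) < j"
        by linarith
      then show ?thesis
        by (simp add: coeff_eq_0)
    qed (simp add: coeff_eq_0)
  qed
qed

lemma total_degree_below_0: "total_degree_below 0 p \<Longrightarrow> p = 0"
  unfolding total_degree_below_def by (auto intro!: poly_eqI)

lemma total_degree_below_divdiff_comb: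
  "total_degree_below (Suc D) p \<Longrightarrow> total_degree_below D (divdiff_comb a b p)"
  unfolding total_degree_below_def by (simp add: coeff_coeff_divdiff_comb)

lemma divdiff_comb_locally_nilpotent: "\<exists>k. (divdiff_comb a b ^^ k) p = 0"
proof -
  obtain D where D: "total_degree_below D p"
    using total_degree_below_exists by blast
  have "total_degree_below (D - k) ((divdiff_comb a b ^^ k) p)" for k
  proof (induction k)
    case (Suc k)
    then show ?case
      by (cases "D - k") (auto intro: total_degree_below_divdiff_comb
          simp: total_degree_below_def coeff_coeff_divdiff_comb)
  qed (simp add: D)
  then have "total_degree_below 0 ((divdiff_comb a b ^^ D) p)"
    by (metis diff_self_eq_0)
  then show ?thesis
    using total_degree_below_0 by blast
qed

lemma divdiff_comb_unique_solution: "\<exists>!h. h = p + divdiff_comb a b h"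
  by (rule unique_solution_if_locally_nilpotent[OF divdiff_comb_add divdiff_comb_locally_nilpotent])

lemma fps_cmap_nth [simp]: "fps_cmap f F $ n = f (F $ n)"
  by (simp add: fps_cmap_def)

lemma fps_const_divY_divX:
  "fps_const [:[:a:]:] * fps_cmap divY H + fps_const [:[:b:]:] * fps_cmap divX H
     = fps_cmap (divdiff_comb a b) H"
  by (simp add: fps_eq_iff divdiff_comb_def divY_eq_poly_shift divX_eq_map_poly_shift)

lemma fps_cmap_fixpoint_iff:
  assumes unique: "\<And>p. \<exists>!h. h = p + N h"
  shows "H = P + fps_cmap N H \<longleftrightarrow> H = fps_cmap (\<lambda>p. THE h. h = p + N h) P"
proof -
  have "H $ n = P $ n + N (H $ n) \<longleftrightarrow> H $ n = (THE h. h = P $ n + N h)" for n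
  proof
    assume "H $ n = P $ n + N (H $ n)"
    then show "H $ n = (THE h. h = P $ n + N h)"
      by (rule the1_equality[OF unique, symmetric])
  next
    assume H_n: "H $ n = (THE h. h = P $ n + N h)"
    show "H $ n = P $ n + N (H $ n)"
      unfolding H_n by (rule theI'[OF unique])
  qed
  then show ?thesis
    by (simp add: fps_eq_iff)
qed

definition fps_eq_below :: "nat \<Rightarrow> 'a::zero fps \<Rightarrow> 'a fps \<Rightarrow> bool" where
  "fps_eq_below n F G \<longleftrightarrow> (\<forall>m<n. F $ m = G $ m)"

lemma fps_eq_below_refl: "fps_eq_below n F F"
  by (simp add: fps_eq_below_def)

lemma fps_eq_below_add:
  "fps_eq_below n F F' \<Longrightarrow> fps_eq_below n G G' \<Longrightarrow> fps_eq_below n (F + G) (F' + G')"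
  by (simp add: fps_eq_below_def)

lemma fps_eq_below_mult:
  fixes F :: "'a::comm_semiring_1 fps"
  shows "fps_eq_below n F F' \<Longrightarrow> fps_eq_below n G G' \<Longrightarrow> fps_eq_below n (F * G) (F' * G')"
  unfolding fps_eq_below_def fps_mult_nth by (auto intro!: sum.cong)

lemma fps_eq_below_X_mult:
  fixes F :: "'a::comm_semiring_1 fps"
  shows "fps_eq_below n F F' \<Longrightarrow> fps_eq_below (Suc n) (fps_X * F) (fps_X * F')"
  unfolding fps_eq_below_def by auto

lemma fps_eq_below_cmap: "fps_eq_below n F F' \<Longrightarrow> fps_eq_below n (fps_cmap f F) (fps_cmap f F')"
  by (simp add: fps_eq_below_def)

lemma fps_unique_fixpoint:
  fixes \<Phi> :: "'a::zero fps \<Rightarrow> 'a fps"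
  assumes causal: "\<And>F G n. fps_eq_below n F G \<Longrightarrow> fps_eq_below (Suc n) (\<Phi> F) (\<Phi> G)"
  shows "\<exists>!W. W = \<Phi> W"
proof -
  define I where "I k = (\<Phi> ^^ k) 0" for k
  have I_step: "fps_eq_below k (I k) (I (Suc k))" for k
  proof (induction k)
    case (Suc k)
    then show ?case
      using causal[OF Suc.IH] by (simp add: I_def)
  qed (simp add: fps_eq_below_def)
  have I_stable: "fps_eq_below k (I k) (I (k + j))" for k j
  proof (induction j)
    case (Suc j)
    then show ?case
      using I_step[of "k + j"] by (simp add: fps_eq_below_def)
  qed (simp add: fps_eq_below_refl)
  define W where "W = Abs_fps (\<lambda>n. I (Suc n) $ n)"
  have W_below: "fps_eq_below n W (I n)" for n
    unfolding fps_eq_below_def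
  proof (intro allI impI)
    fix m
    assume "m < n"
    then obtain j where "n = Suc m + j"
      using less_iff_Suc_add by blast
    then show "W $ m = I n $ m"
      using I_stable[of "Suc m" j] by (simp add: W_def fps_eq_below_def)
  qed
  have "\<Phi> W $ n = I (Suc n) $ n" for n
    using causal[OF W_below[of n]] by (simp add: I_def fps_eq_below_def)
  then have W: "W = \<Phi> W"
    by (simp add: fps_eq_iff W_def)
  moreover have "V = W" if V: "V = \<Phi> V" for V
  proof -
    have "fps_eq_below n V W" for n
    proof (induction n)
      case (Suc n)
      then show ?case
        using causal[OF Suc.IH] by (simp flip: V W)
    qed (simp add: fps_eq_below_def)
    then show ?thesis
      by (auto simp: fps_eq_iff fps_eq_below_def)
  qed
  ultimately show ?thesis
    by blast
qed

lemma ex1_pair_by_graph: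
  assumes "\<And>x y. Q x y \<longleftrightarrow> y = f x"
    and "\<exists>!x. P x (f x)"
  shows "\<exists>!(x, y). P x y \<and> Q x y"
  using assms by (auto simp: Ex1_def)

theorem mainTheorem3:
  fixes \<omega> :: complex
  assumes "\<omega> \<noteq> 0"
  shows "\<exists>!(W, H). (W :: complex poly fps) =
             fps_const [:0, 0, 1:] * fps_X * W ^ 2
           + fps_const (smult \<omega> [:0, 1:]) * fps_X * fps_cmap sub_y0 H
           + fps_const (smult (inverse \<omega>) [:0, 1:]) * fps_X * fps_cmap sub_x0 H
           + 1
         \<and> (H :: complex poly poly fps) =
             fps_cmap as_x W * fps_cmap as_y W
           + fps_const [:[:inverse \<omega>:]:] * fps_cmap divY H
           + fps_const [:[:\<omega>:]:] * fps_cmap divX H"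
proof (rule ex1_pair_by_graph)
  define Hof where "Hof W = fps_cmap (\<lambda>p. THE h. h = p + divdiff_comb (inverse \<omega>) \<omega> h)
    (fps_cmap as_x W * fps_cmap as_y W)" for W :: "complex poly fps"
  show "H = fps_cmap as_x W * fps_cmap as_y W
           + fps_const [:[:inverse \<omega>:]:] * fps_cmap divY H
           + fps_const [:[:\<omega>:]:] * fps_cmap divX H \<longleftrightarrow> H = Hof W" for W H
    unfolding add.assoc fps_const_divY_divX Hof_def
    by (rule fps_cmap_fixpoint_iff[OF divdiff_comb_unique_solution])
  show "\<exists>!W. W = fps_const [:0, 0, 1:] * fps_X * W ^ 2
           + fps_const (smult \<omega> [:0, 1:]) * fps_X * fps_cmap sub_y0 (Hof W)
           + fps_const (smult (inverse \<omega>) [:0, 1:]) * fps_X * fps_cmap sub_x0 (Hof W)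
           + 1"
    unfolding Hof_def mult.assoc power2_eq_square
    by (intro fps_unique_fixpoint fps_eq_below_add fps_eq_below_mult fps_eq_below_X_mult
        fps_eq_below_cmap fps_eq_below_refl)
qed

end
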